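(* Let $C>0$ and $f:\mathbb R\to\mathbb R$, $f(x)=\log(1+e^{-x})$. Then for all $a\in[-C,C]$ and all $b\in\mathbb R$, \[f(a)\ge f(b)+f'(b)(a-b)+\frac{e^b}{2(1+C)}f'(b)^2(a-b)^2.\] *)

theory Defs
  imports "HOL-Analysis.Analysis"
begin

definition logistic_loss :: "real \<Rightarrow> real" where
  "logistic_loss x = ln (1 + exp (- x))"

end

theory Submission
  imports Defs
begin

text \<open>Write \<open>f\<close> for the logistic loss. Its second derivative is
  \<open>f'' t = exp t / (1 + exp t)\<^sup>2 = 1 / (2 + 2 cosh t)\<close>, and the coefficient \<open>exp b * f' b\<^sup>2\<close>
  of the claim is exactly \<open>f'' b\<close>. Comparing \<open>f\<close> with a function that has the same value and
  slope at \<open>b\<close> but a smaller second derivative between \<open>a\<close> and \<open>b\<close> gives two lower bounds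
  for \<open>f a - f b - f' b * (a - b)\<close>. If \<open>|a| \<le> |b|\<close>, then \<open>f'' \<ge> f'' b\<close> on the segment and the bound
  is \<open>f'' b * (a - b)\<^sup>2 / 2\<close>; this settles the case \<open>|b| > C\<close>. In general
  \<open>f'' t \<ge> f'' b * exp (-|t - b|)\<close>, and the bound is \<open>f'' b * (exp (-d) + d - 1)\<close> with
  \<open>d = |a - b|\<close>; if \<open>|b| \<le> C\<close> then \<open>d \<le> 2 C\<close> and
  \<open>exp (-d) + d - 1 \<ge> d\<^sup>2 / (2 + d) \<ge> d\<^sup>2 / (2 (1 + C))\<close>.\<close>

lemma tangent_plus_comparison_le:
  fixes g g' g'' h h' h'' :: "real \<Rightarrow> real"
  assumes "convex C" and "a \<in> C" and "b \<in> C"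
    and "\<And>t. t \<in> C \<Longrightarrow> (g has_real_derivative g' t) (at t)"
    and "\<And>t. t \<in> C \<Longrightarrow> (g' has_real_derivative g'' t) (at t)"
    and "\<And>t. t \<in> C \<Longrightarrow> (h has_real_derivative h' t) (at t)"
    and "\<And>t. t \<in> C \<Longrightarrow> (h' has_real_derivative h'' t) (at t)"
    and "\<And>t. t \<in> C \<Longrightarrow> h'' t \<le> g'' t"
    and "h b = 0" and "h' b = 0"
  shows "g b + g' b * (a - b) + h a \<le> g a"
proof -
  have "(g' b - h' b) * (a - b) \<le> (g a - h a) - (g b - h b)"
    by (rule f''_imp_f'[OF assms(1), where f = "\<lambda>t. g t - h t" and f' = "\<lambda>t. g' t - h' t"
          and f'' = "\<lambda>t. g'' t - h'' t"])
      (use assms(2-8) in \<open>auto intro!: derivative_eq_intros\<close>)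
  then show ?thesis
    using assms(9,10) by simp
qed

lemma quadratic_lower_bound:
  fixes g g' g'' :: "real \<Rightarrow> real"
  assumes "\<And>t. t \<in> closed_segment a b \<Longrightarrow> (g has_real_derivative g' t) (at t)"
    and "\<And>t. t \<in> closed_segment a b \<Longrightarrow> (g' has_real_derivative g'' t) (at t)"
    and "\<And>t. t \<in> closed_segment a b \<Longrightarrow> k \<le> g'' t"
  shows "g b + g' b * (a - b) + k / 2 * (a - b)\<^sup>2 \<le> g a"
proof (rule tangent_plus_comparison_le[OF convex_closed_segment _ _ assms(1,2) _ _ assms(3)])
  fix t :: real
  show "((\<lambda>t. k / 2 * (t - b)\<^sup>2) has_real_derivative k * (t - b)) (at t)"
    by (auto intro!: derivative_eq_intros)
  show "((\<lambda>t. k * (t - b)) has_real_derivative k) (at t)"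
    by (auto intro!: derivative_eq_intros)
qed auto

lemma exp_decay_lower_bound:
  fixes g g' g'' :: "real \<Rightarrow> real"
  assumes "\<And>t. t \<in> closed_segment a b \<Longrightarrow> (g has_real_derivative g' t) (at t)"
    and "\<And>t. t \<in> closed_segment a b \<Longrightarrow> (g' has_real_derivative g'' t) (at t)"
    and "\<And>t. t \<in> closed_segment a b \<Longrightarrow> k * exp (- \<bar>t - b\<bar>) \<le> g'' t"
  shows "g b + g' b * (a - b) + k * (exp (- \<bar>a - b\<bar>) + \<bar>a - b\<bar> - 1) \<le> g a"
proof -
  define s :: real where "s = (if b \<le> a then 1 else -1)"
  have s_abs: "s * (t - b) = \<bar>t - b\<bar>" if "t \<in> closed_segment a b" for t
    using that by (auto simp: s_def closed_segment_eq_real_ivl split: if_splits)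
  have "s * s = 1"
    by (simp add: s_def)
  have "g b + g' b * (a - b) + k * (exp (- (s * (a - b))) + s * (a - b) - 1) \<le> g a"
  proof (rule tangent_plus_comparison_le[OF convex_closed_segment _ _ assms(1,2)])
    fix t :: real
    show "((\<lambda>t. k * (exp (- (s * (t - b))) + s * (t - b) - 1)) has_real_derivative
        k * s * (1 - exp (- (s * (t - b))))) (at t)"
      by (auto intro!: derivative_eq_intros simp: algebra_simps)
    show "((\<lambda>t. k * s * (1 - exp (- (s * (t - b))))) has_real_derivative
        k * exp (- (s * (t - b)))) (at t)"
      using \<open>s * s = 1\<close> by (auto intro!: derivative_eq_intros simp: algebra_simps)
    assume "t \<in> closed_segment a b"
    then show "k * exp (- (s * (t - b))) \<le> g'' t"
      using assms(3) s_abs by simp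
  qed auto
  then show ?thesis
    by (simp add: s_abs)
qed

lemma exp_minus_add_self_minus_one_ge:
  fixes d :: real
  assumes "0 \<le> d"
  shows "d\<^sup>2 / (2 + d) \<le> exp (- d) + d - 1"
proof -
  have "exp (- 0) * (2 + 0) - (2 - 0) \<le> exp (- d) * (2 + d) - (2 - d)"
  proof (rule DERIV_nonneg_imp_nondecreasing[OF assms])
    fix u :: real
    assume "0 \<le> u"
    have "exp (- u) * (1 + u) \<le> exp (- u) * exp u"
      by (rule mult_left_mono) (simp_all add: exp_ge_add_one_self)
    then have "0 \<le> 1 - exp (- u) * (1 + u)"
      by (simp flip: exp_add)
    moreover have "((\<lambda>u. exp (- u) * (2 + u) - (2 - u)) has_real_derivative
        1 - exp (- u) * (1 + u)) (at u)"
      by (auto intro!: derivative_eq_intros simp: algebra_simps)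
    ultimately show "\<exists>y. ((\<lambda>u. exp (- u) * (2 + u) - (2 - u)) has_real_derivative y) (at u) \<and> 0 \<le> y"
      by blast
  qed
  then have "d\<^sup>2 \<le> (exp (- d) + d - 1) * (2 + d)"
    by (simp add: algebra_simps power2_eq_square)
  then show ?thesis
    using assms by (simp add: divide_le_eq)
qed

lemma logistic_loss_has_real_derivative:
  "(logistic_loss has_real_derivative - 1 / (1 + exp t)) (at t)"
proof -
  have "((\<lambda>x. ln (1 + exp (- x))) has_real_derivative - exp (- t) / (1 + exp (- t))) (at t)"
    by (auto intro!: derivative_eq_intros simp: add_pos_pos)
  moreover have "- exp (- t) / (1 + exp (- t)) = - 1 / (1 + exp t)"
    by (simp add: exp_minus field_simps)
  ultimately show ?thesis
    by (simp add: logistic_loss_def[abs_def])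
qed

lemma deriv_logistic_loss: "deriv logistic_loss t = - 1 / (1 + exp t)"
  by (rule DERIV_imp_deriv[OF logistic_loss_has_real_derivative])

definition logistic_curvature :: "real \<Rightarrow> real" where
  "logistic_curvature t = 1 / (2 + 2 * cosh t)"

lemma logistic_curvature_pos: "0 < logistic_curvature t"
  by (simp add: logistic_curvature_def add_pos_pos)

lemma exp_div_one_plus_exp_sq: "exp t / (1 + exp t)\<^sup>2 = logistic_curvature t"
proof -
  have "(1 + exp t)\<^sup>2 = exp t * (2 + 2 * cosh t)"
    by (simp add: cosh_def exp_minus field_simps power2_eq_square)
  then show ?thesis
    by (simp add: logistic_curvature_def)
qed

lemma deriv_logistic_loss_has_real_derivative:
  "((\<lambda>t. - 1 / (1 + exp t)) has_real_derivative logistic_curvature t) (at t)"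
proof -
  have "1 + exp t \<noteq> 0"
    by (metis add_pos_pos exp_gt_zero less_irrefl zero_less_one)
  then have "((\<lambda>t. - 1 / (1 + exp t)) has_real_derivative exp t / (1 + exp t)\<^sup>2) (at t)"
    by (auto intro!: derivative_eq_intros simp: power2_eq_square)
  then show ?thesis
    by (simp add: exp_div_one_plus_exp_sq)
qed

lemma exp_mult_deriv_logistic_loss_sq:
  "exp t * (deriv logistic_loss t)\<^sup>2 = logistic_curvature t"
  by (simp add: deriv_logistic_loss power_divide flip: exp_div_one_plus_exp_sq)

lemma logistic_curvature_le_of_abs_le:
  assumes "\<bar>t\<bar> \<le> \<bar>b\<bar>"
  shows "logistic_curvature b \<le> logistic_curvature t"
proof -
  have "cosh t \<le> cosh b"
    using cosh_real_nonneg_le_iff[of "\<bar>t\<bar>" "\<bar>b\<bar>"] assms by simp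
  then show ?thesis
    by (simp add: logistic_curvature_def frac_le add_pos_pos)
qed

lemma exp_minus_abs_diff_mult_cosh_le: "exp (- \<bar>t - b\<bar>) * cosh t \<le> cosh (b :: real)"
proof -
  have "exp (- \<bar>t - b\<bar>) * exp t \<le> exp b" and "exp (- \<bar>t - b\<bar>) * exp (- t) \<le> exp (- b)"
    by (simp_all flip: exp_add)
  then show ?thesis
    by (simp add: cosh_def algebra_simps)
qed

lemma logistic_curvature_exp_decay:
  "logistic_curvature b * exp (- \<bar>t - b\<bar>) \<le> logistic_curvature t"
proof -
  have "exp (- \<bar>t - b\<bar>) \<le> 1"
    by simp
  then have "exp (- \<bar>t - b\<bar>) * (2 + 2 * cosh t) \<le> 2 + 2 * cosh b"
    using exp_minus_abs_diff_mult_cosh_le[of t b] by (simp only: algebra_simps)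
  then show ?thesis
    by (simp add: logistic_curvature_def field_simps add_pos_pos)
qed

lemma logistic_loss_quadratic_lower_bound:
  assumes "\<bar>a\<bar> \<le> \<bar>b\<bar>"
  shows "logistic_loss b + deriv logistic_loss b * (a - b) + logistic_curvature b / 2 * (a - b)\<^sup>2
    \<le> logistic_loss a"
proof -
  have "\<bar>t\<bar> \<le> \<bar>b\<bar>" if "t \<in> closed_segment a b" for t
    using that assms by (auto simp: closed_segment_eq_real_ivl split: if_splits)
  then show ?thesis
    unfolding deriv_logistic_loss
    by (intro quadratic_lower_bound[where g'' = logistic_curvature] logistic_loss_has_real_derivative
        deriv_logistic_loss_has_real_derivative logistic_curvature_le_of_abs_le)
qed

lemma logistic_loss_exp_decay_lower_bound:
  "logistic_loss b + deriv logistic_loss b * (a - b)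
    + logistic_curvature b * (exp (- \<bar>a - b\<bar>) + \<bar>a - b\<bar> - 1) \<le> logistic_loss a"
  unfolding deriv_logistic_loss
  by (intro exp_decay_lower_bound[where g'' = logistic_curvature] logistic_loss_has_real_derivative
      deriv_logistic_loss_has_real_derivative logistic_curvature_exp_decay)

theorem lemma3:
  fixes C a b :: real
  assumes "C > 0" and "a \<in> {-C..C}"
  shows "logistic_loss a \<ge> logistic_loss b + deriv logistic_loss b * (a - b)
           + exp b / (2 * (1 + C)) * (deriv logistic_loss b)\<^sup>2 * (a - b)\<^sup>2"
proof -
  define k where "k = logistic_curvature b"
  have "0 < k"
    by (simp add: k_def logistic_curvature_pos)
  have coefficient: "exp b / (2 * (1 + C)) * (deriv logistic_loss b)\<^sup>2 = k / (2 * (1 + C))"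
    by (simp add: k_def flip: exp_mult_deriv_logistic_loss_sq)
  have "k / (2 * (1 + C)) * (a - b)\<^sup>2 \<le> logistic_loss a - logistic_loss b - deriv logistic_loss b * (a - b)"
  proof (cases "C < \<bar>b\<bar>")
    case True
    with assms(2) have "\<bar>a\<bar> \<le> \<bar>b\<bar>"
      by auto
    note logistic_loss_quadratic_lower_bound[OF this, folded k_def]
    moreover have "k / (2 * (1 + C)) * (a - b)\<^sup>2 \<le> k / 2 * (a - b)\<^sup>2"
      using \<open>0 < k\<close> assms(1) by (intro mult_right_mono divide_left_mono) auto
    ultimately show ?thesis
      by linarith
  next
    case False
    define d where "d = \<bar>a - b\<bar>"
    have "0 \<le> d" and "d \<le> 2 * C"
      using False assms(2) by (auto simp: d_def)
    then have "d\<^sup>2 / (2 * (1 + C)) \<le> d\<^sup>2 / (2 + d)"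
      by (intro divide_left_mono) auto
    with exp_minus_add_self_minus_one_ge[OF \<open>0 \<le> d\<close>] \<open>0 < k\<close>
    have "k * (d\<^sup>2 / (2 * (1 + C))) \<le> k * (exp (- d) + d - 1)"
      by (intro mult_left_mono) auto
    moreover have "k / (2 * (1 + C)) * (a - b)\<^sup>2 = k * (d\<^sup>2 / (2 * (1 + C)))"
      by (simp add: d_def)
    ultimately show ?thesis
      using logistic_loss_exp_decay_lower_bound[of b a] unfolding k_def d_def by linarith
  qed
  then show ?thesis
    unfolding coefficient by simp
qed

end
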